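(* Let $\kappa$ be any infinite cardinal. Then there is a partition $[\kappa]^{<\omega}=A_0\cup A_1$ into two cells such that for no $i\in 2$ and no uncountable family $X\subseteq[\kappa]^{<\omega}$ of pairwise disjoint finite subsets of $\kappa$ do we have $\mathrm{FU}(X)\subseteq A_i$. Consequently, for every uncountable cardinal $\lambda$ and every cardinal $\kappa\geq\lambda$, the statement $\mathrm{Hind}(\kappa,\lambda)$ fails.
   Context: $[\kappa]^{<\omega}$ denotes the family of all finite subsets of $\kappa$. For a family $X$ of sets, $\mathrm{FU}(X)=\{\bigcup_{Y\in F}Y : F\subseteq X \text{ finite and nonempty}\}$ is the set of finite unions of elements of $X$. For cardinals $\lambda\leq\kappa$, $\mathrm{Hind}(\kappa,\lambda)$ is the statement: for every partition $[\kappa]^{<\omega}=A_0\cup A_1$ into two cells there exist a family $X\subseteq[\kappa]^{<\omega}$ of cardinality $\lambda$ consisting of pairwise disjoint finite subsets of $\kappa$, and an $i\in 2$, such that $\mathrm{FU}(X)\subseteq A_i$. *)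

theory Defs
  imports "HOL-Library.Equipollence" "HOL-Library.Countable_Set"
begin

text \<open>The cardinal kappa is represented by an arbitrary set K (of that cardinality);
  [K]^{<omega} is the family of finite subsets of K.\<close>

definition fin_subsets :: "'a set \<Rightarrow> 'a set set" where
  "fin_subsets K = {F. F \<subseteq> K \<and> finite F}"

definition FU :: "'a set set \<Rightarrow> 'a set set" where
  "FU X = {\<Union>F | F. F \<subseteq> X \<and> finite F \<and> F \<noteq> {}}"

definition Hind :: "'a set \<Rightarrow> 'b set \<Rightarrow> bool" where
  "Hind K L \<longleftrightarrow> (\<forall>A0 A1. A0 \<union> A1 = fin_subsets K \<and> A0 \<inter> A1 = {} \<longrightarrow>
     (\<exists>X. X \<subseteq> fin_subsets K \<and> pairwise disjnt X \<and> X \<approx> L \<and>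
          (FU X \<subseteq> A0 \<or> FU X \<subseteq> A1)))"

end

theory Submission
  imports Defs "HOL-Library.Discrete_Functions"
begin

text \<open>Colour a finite set by the parity of \<open>\<lfloor>log\<^sub>2 |F|\<rfloor>\<close>. An uncountable family of
  nonempty finite sets contains two distinct members \<open>x\<close>, \<open>y\<close> of the same size, since there
  are only countably many sizes. If they are disjoint then \<open>|x \<union> y| = 2|x|\<close>, so \<open>x\<close> and
  \<open>x \<union> y\<close>, both finite unions from the family, get different colours.\<close>

definition log_parity_cell :: "'a set \<Rightarrow> bool \<Rightarrow> 'a set set" where
  "log_parity_cell K b = {F \<in> fin_subsets K. even (floor_log (card F)) = b}"

lemma log_parity_cells_partition:
  "log_parity_cell K True \<union> log_parity_cell K False = fin_subsets K"
  "log_parity_cell K True \<inter> log_parity_cell K False = {}"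
  unfolding log_parity_cell_def by auto

lemma log_parity_cell_double:
  assumes "x \<in> log_parity_cell K b" "y \<in> log_parity_cell K b" "card x \<noteq> 0"
  shows "card y \<noteq> 2 * card x"
  using assms unfolding log_parity_cell_def by auto

lemma FU_singleton_mem: "x \<in> X \<Longrightarrow> x \<in> FU X"
  unfolding FU_def by (intro CollectI exI[of _ "{x}"]) auto

lemma FU_Un_mem: "x \<in> X \<Longrightarrow> y \<in> X \<Longrightarrow> x \<union> y \<in> FU X"
  unfolding FU_def by (intro CollectI exI[of _ "{x, y}"]) auto

lemma uncountable_obtain_same_card:
  assumes "uncountable X"
  obtains x y where "x \<in> X" "y \<in> X" "x \<noteq> y" "x \<noteq> {}" "card x = card y"
proof -
  have "uncountable (X - {{}})"
    using assms countable_insert[of "X - {{}}" "{}"] countable_subset[of X "insert {} (X - {{}})"]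
    by blast
  hence "\<not> inj_on card (X - {{}})"
    using countableI[of card "X - {{}}"] by auto
  thus thesis
    using that unfolding inj_on_def by blast
qed

lemma HindE:
  assumes "Hind K L" "A0 \<union> A1 = fin_subsets K" "A0 \<inter> A1 = {}"
  obtains X where "X \<subseteq> fin_subsets K" "pairwise disjnt X" "X \<approx> L" "FU X \<subseteq> A0 \<or> FU X \<subseteq> A1"
  using assms unfolding Hind_def by meson

lemma uncountable_eqpoll: "uncountable L \<Longrightarrow> X \<approx> L \<Longrightarrow> uncountable X"
  by (meson countable_eqpoll eqpoll_sym)

lemma no_uncountable_FU_homogeneous_log_parity:
  assumes "X \<subseteq> fin_subsets K" "pairwise disjnt X" "uncountable X"
  shows "\<not> FU X \<subseteq> log_parity_cell K b"
proof
  assume homogeneous: "FU X \<subseteq> log_parity_cell K b"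
  obtain x y where xy: "x \<in> X" "y \<in> X" "x \<noteq> y" "x \<noteq> {}" "card x = card y"
    using uncountable_obtain_same_card[OF assms(3)] .
  have finite: "finite x" "finite y"
    using xy(1,2) assms(1) by (auto simp: fin_subsets_def)
  have "disjnt x y"
    using assms(2) xy(1-3) by (auto simp: pairwise_def)
  hence "card (x \<union> y) = 2 * card x"
    using card_Un_disjoint[OF finite] xy(5) by (simp add: disjnt_def)
  moreover have "card x \<noteq> 0"
    using finite(1) xy(4) by simp
  moreover have "x \<in> log_parity_cell K b" "x \<union> y \<in> log_parity_cell K b"
    using homogeneous FU_singleton_mem[OF xy(1)] FU_Un_mem[OF xy(1,2)] by auto
  ultimately show False
    using log_parity_cell_double by blast
qed

theorem theorem2p1:
  fixes K :: "'a set"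
  assumes "infinite K"
  shows "(\<exists>A0 A1. A0 \<union> A1 = fin_subsets K \<and> A0 \<inter> A1 = {} \<and>
            \<not> (\<exists>X. X \<subseteq> fin_subsets K \<and> pairwise disjnt X \<and> uncountable X \<and>
                   (FU X \<subseteq> A0 \<or> FU X \<subseteq> A1)))
         \<and> (\<forall>L :: 'b set. uncountable L \<and> L \<lesssim> K \<longrightarrow> \<not> Hind K L)"
proof (intro conjI allI impI)
  show "\<exists>A0 A1. A0 \<union> A1 = fin_subsets K \<and> A0 \<inter> A1 = {} \<and>
          \<not> (\<exists>X. X \<subseteq> fin_subsets K \<and> pairwise disjnt X \<and> uncountable X \<and>
                 (FU X \<subseteq> A0 \<or> FU X \<subseteq> A1))"
  proof (intro exI conjI)
    show "log_parity_cell K True \<union> log_parity_cell K False = fin_subsets K"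
      "log_parity_cell K True \<inter> log_parity_cell K False = {}"
      by (fact log_parity_cells_partition)+
    show "\<not> (\<exists>X. X \<subseteq> fin_subsets K \<and> pairwise disjnt X \<and> uncountable X \<and>
                 (FU X \<subseteq> log_parity_cell K True \<or> FU X \<subseteq> log_parity_cell K False))"
      using no_uncountable_FU_homogeneous_log_parity by blast
  qed
next
  fix L :: "'b set"
  assume L: "uncountable L \<and> L \<lesssim> K"
  show "\<not> Hind K L"
  proof
    assume "Hind K L"
    obtain X where X: "X \<subseteq> fin_subsets K" "pairwise disjnt X" "X \<approx> L"
        and homogeneous: "FU X \<subseteq> log_parity_cell K True \<or> FU X \<subseteq> log_parity_cell K False"
      using HindE[OF \<open>Hind K L\<close> log_parity_cells_partition] .
    have "uncountable X"
      using uncountable_eqpoll[OF conjunct1[OF L] X(3)] .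
    then show False
      using homogeneous no_uncountable_FU_homogeneous_log_parity[OF X(1,2)] by metis
  qed
qed

end
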